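(* For $A,x\in\mathbb{R}$ define $E_0(A,x):=1$, $E_1(A,x):=e^{(1-x)A}$ and, for $n\ge2$, \[ E_n(A,x):=\begin{cases} \exp\!\Big(\big[x(E_1+E_3+\cdots+E_{n-1})-\tfrac n2\big]A\Big), & n \text{ even},\\[4pt] \exp\!\Big(\big[\tfrac{n+1}{2}-x(E_0+E_2+\cdots+E_{n-1})\big]A\Big), & n\text{ odd},\end{cases} \] with all $E_j$ evaluated at $(A,x)$. Define $\varphi_1(A,x):=x-1$, $\varphi_n(A,x):=\varphi_{n-1}(A,x)-1+xE_{n-1}(A,x)$ for $n\ge2$, and the polynomial $p_n(A):=\frac{\partial\varphi_n}{\partial x}(A,1)$. Then for every even $n\ge3$, \[ \frac{p_n(A)}{2-A}=p_{n-1}(A)-\frac{p_{n-2}(A)}{2-A}, \] and for every odd $n\ge3$, \[ \frac{p_n(A)}{2+A}=p_{n-1}(A)-\frac{p_{n-2}(A)}{2+A}. \] Equivalently, $p_n(A)=[2-(-1)^nA]\,p_{n-1}(A)-p_{n-2}(A)$ for all $n\ge3$. *)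

theory Defs
  imports "HOL-Analysis.Analysis"
begin

function E :: "nat \<Rightarrow> real \<Rightarrow> real \<Rightarrow> real" where
  "E n A x =
    (if n = 0 then 1
     else if n = 1 then exp ((1 - x) * A)
     else if even n then
       exp ((x * (\<Sum>j<n. if odd j then E j A x else 0) - real n / 2) * A)
     else
       exp ((real (n + 1) / 2 - x * (\<Sum>j<n. if even j then E j A x else 0)) * A))"
  by auto
termination
  by (relation "Wellfounded.measure (\<lambda>(n, A, x). n)") auto

declare E.simps [simp del]

fun phi :: "nat \<Rightarrow> real \<Rightarrow> real \<Rightarrow> real" where
  "phi 0 A x = x - 1"  (* unused: the paper starts at n = 1 *)
| "phi (Suc 0) A x = x - 1"
| "phi (Suc (Suc n)) A x = phi (Suc n) A x - 1 + x * E (Suc n) A x"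

definition p :: "nat \<Rightarrow> real \<Rightarrow> real" where
  "p n A = deriv (\<lambda>x. phi n A x) 1"

end

theory Submission
  imports Defs
begin

text \<open>The four cases defining \<open>E\<close> are one formula: \<open>E n\<close> is the exponential of
  \<open>(-1)^n (x S - \<lceil>n/2\<rceil>) A\<close>, where \<open>S\<close> sums the \<open>E j\<close> with \<open>j < n\<close> of parity opposite to
  \<open>n\<close>. That sum has \<open>\<lceil>n/2\<rceil>\<close> terms, so every \<open>E j\<close> equals 1 at \<open>x = 1\<close>, and the chain rule
  gives \<open>e n = dE n A = \<partial>\<^sub>x E n (A, 1) = (-1)^n A (\<lceil>n/2\<rceil> + S')\<close> with \<open>S'\<close> the corresponding sum of the
  \<open>e j\<close>. The opposite-parity index sets of \<open>n + 1\<close> and \<open>n\<close> partition \<open>{0..n}\<close>, hence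
  \<open>e (n+1) - e n = (-1)^(n+1) A (n + 1 + e 0 + \<dots> + e n) = (-1)^(n+1) A p (n+1)\<close>; together with
  \<open>p (n+1) - p n = 1 + e n\<close> this is the three-term recurrence.\<close>

definition opposite_parity :: "nat \<Rightarrow> nat set" where
  "opposite_parity n = {j \<in> {..<n}. odd (n + j)}"

lemma finite_opposite_parity [simp]: "finite (opposite_parity n)"
  by (simp add: opposite_parity_def)

lemma opposite_parity_less: "j \<in> opposite_parity n \<Longrightarrow> j < n"
  by (simp add: opposite_parity_def)

lemma lessThan_Suc_opposite_parity:
  "{..<Suc n} = opposite_parity (Suc n) \<union> opposite_parity n"
  "opposite_parity (Suc n) \<inter> opposite_parity n = {}"
  by (auto simp: opposite_parity_def less_Suc_eq)

lemma card_opposite_parity: "card (opposite_parity n) = (n + 1) div 2"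
proof (induction n)
  case 0
  then show ?case by (simp add: opposite_parity_def)
next
  case (Suc n)
  have "Suc n = card (opposite_parity (Suc n) \<union> opposite_parity n)"
    by (metis card_lessThan lessThan_Suc_opposite_parity(1))
  also have "\<dots> = card (opposite_parity (Suc n)) + card (opposite_parity n)"
    by (rule card_Un_disjoint) (simp_all add: lessThan_Suc_opposite_parity(2))
  finally show ?case using Suc by simp
qed

lemma E_eq_exp_opposite_parity:
  "E n A x = exp ((-1) ^ n * (x * (\<Sum>j\<in>opposite_parity n. E j A x) - real ((n + 1) div 2)) * A)"
proof -
  have sum_eq: "(\<Sum>j\<in>opposite_parity n. E j A x) = (\<Sum>j<n. if odd (n + j) then E j A x else 0)"
    unfolding opposite_parity_def by (rule sum.inter_filter) simp
  consider "n = 0" | "n = 1" | "n \<ge> 2" "even n" | "n \<ge> 2" "odd n" by linarith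
  then show ?thesis
  proof cases
    case 1
    then show ?thesis by (simp add: E.simps opposite_parity_def)
  next
    case 2
    moreover have "opposite_parity 1 = {0}" by (auto simp: opposite_parity_def)
    ultimately show ?thesis by (simp add: E.simps algebra_simps)
  next
    case 3
    then show ?thesis unfolding sum_eq by (subst E.simps) (auto elim!: evenE)
  next
    case 4
    then show ?thesis unfolding sum_eq by (subst E.simps) (auto elim!: oddE simp: algebra_simps)
  qed
qed

lemma E_at_one: "E n A 1 = 1"
proof (induction n rule: less_induct)
  case (less n)
  then have "(\<Sum>j\<in>opposite_parity n. E j A 1) = card (opposite_parity n)"
    by (simp add: opposite_parity_less)
  then show ?case by (subst E_eq_exp_opposite_parity) (simp add: card_opposite_parity)
qed

function dE :: "nat \<Rightarrow> real \<Rightarrow> real" where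
  "dE n A = (-1) ^ n * A * (real ((n + 1) div 2) + (\<Sum>j\<in>opposite_parity n. dE j A))"
  by auto
termination
  by (relation "Wellfounded.measure fst") (auto simp: opposite_parity_less)

declare dE.simps [simp del]

lemma E_has_derivative_at_one: "((\<lambda>x. E n A x) has_real_derivative dE n A) (at 1)"
proof (induction n rule: less_induct)
  case (less n)
  define S where "S x = (\<Sum>j\<in>opposite_parity n. E j A x)" for x
  have "(S has_real_derivative (\<Sum>j\<in>opposite_parity n. dE j A)) (at 1)"
    unfolding S_def by (rule DERIV_sum) (simp add: less.IH opposite_parity_less)
  moreover have "S 1 = real ((n + 1) div 2)"
    by (simp add: S_def E_at_one card_opposite_parity)
  ultimately have "((\<lambda>x. exp ((-1) ^ n * (x * S x - real ((n + 1) div 2)) * A))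
      has_real_derivative dE n A) (at 1)"
    by (auto intro!: derivative_eq_intros simp: dE.simps[of n] algebra_simps)
  then show ?case by (subst E_eq_exp_opposite_parity[abs_def]) (simp add: S_def)
qed

lemma phi_has_derivative_at_one:
  "((\<lambda>x. phi (Suc n) A x) has_real_derivative real (Suc n) + (\<Sum>j<Suc n. dE j A)) (at 1)"
proof (induction n)
  case 0
  then show ?case by (auto intro!: derivative_eq_intros simp: dE.simps[of 0] opposite_parity_def)
next
  case (Suc n)
  then show ?case
    by (auto intro!: derivative_eq_intros E_has_derivative_at_one simp: E_at_one)
qed

lemma p_Suc_eq_sum: "p (Suc n) A = real (Suc n) + (\<Sum>j<Suc n. dE j A)"
  unfolding p_def by (rule DERIV_imp_deriv[OF phi_has_derivative_at_one])

lemma p_Suc_Suc: "p (Suc (Suc n)) A = p (Suc n) A + 1 + dE (Suc n) A"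
  unfolding p_Suc_eq_sum[of "Suc n"] p_Suc_eq_sum[of n] by simp

lemma dE_Suc_diff: "dE (Suc n) A - dE n A = (-1) ^ Suc n * A * p (Suc n) A"
proof -
  have "dE (Suc n) A - dE n A = (-1) ^ Suc n * A *
      ((real ((Suc n + 1) div 2) + real ((n + 1) div 2))
       + ((\<Sum>j\<in>opposite_parity (Suc n). dE j A) + (\<Sum>j\<in>opposite_parity n. dE j A)))"
    by (simp only: dE.simps[of "Suc n"] dE.simps[of n] power_Suc) (simp add: algebra_simps)
  also have "(\<Sum>j\<in>opposite_parity (Suc n). dE j A) + (\<Sum>j\<in>opposite_parity n. dE j A)
      = (\<Sum>j<Suc n. dE j A)"
    unfolding lessThan_Suc_opposite_parity(1)
    by (rule sum.union_disjoint[symmetric]) (simp_all add: lessThan_Suc_opposite_parity(2))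
  also have "real ((Suc n + 1) div 2) + real ((n + 1) div 2) = real (Suc n)"
    unfolding of_nat_add[symmetric] of_nat_eq_iff by presburger
  finally show ?thesis by (simp only: p_Suc_eq_sum)
qed

lemma p_recurrence:
  assumes "n \<ge> 3"
  shows "p n A = (2 - (-1) ^ n * A) * p (n - 1) A - p (n - 2) A"
proof -
  define m where "m = n - 3"
  have n: "n = Suc (Suc (Suc m))" using assms by (simp add: m_def)
  have "p n A = 2 * p (Suc (Suc m)) A - p (Suc m) A + (dE (Suc (Suc m)) A - dE (Suc m) A)"
    unfolding n p_Suc_Suc[of "Suc m"] p_Suc_Suc[of m] by simp
  also have "\<dots> = (2 - (-1) ^ n * A) * p (n - 1) A - p (n - 2) A"
    unfolding dE_Suc_diff n by (simp add: algebra_simps)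
  finally show ?thesis .
qed

theorem theorem4p8:
  fixes A :: real and n :: nat
  assumes "n \<ge> 3"
  shows "(even n \<longrightarrow> A \<noteq> 2 \<longrightarrow> p n A / (2 - A) = p (n - 1) A - p (n - 2) A / (2 - A))
       \<and> (odd n \<longrightarrow> A \<noteq> -2 \<longrightarrow> p n A / (2 + A) = p (n - 1) A - p (n - 2) A / (2 + A))
       \<and> p n A = (2 - (-1) ^ n * A) * p (n - 1) A - p (n - 2) A"
proof (intro conjI impI)
  show rec: "p n A = (2 - (-1) ^ n * A) * p (n - 1) A - p (n - 2) A"
    using assms by (rule p_recurrence)
  show "p n A / (2 - A) = p (n - 1) A - p (n - 2) A / (2 - A)" if "even n" "A \<noteq> 2"
    using rec that by (simp add: field_simps)
  show "p n A / (2 + A) = p (n - 1) A - p (n - 2) A / (2 + A)" if "odd n" "A \<noteq> -2"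
  proof -
    have "2 + A \<noteq> 0" using that(2) by linarith
    then show ?thesis using rec that(1) by (simp add: field_simps)
  qed
qed

end
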